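(* There exist universal constants $C,C'>0$ such that the following holds. For every $m>0$, every $\alpha,\beta\in(0,1/3)$, every $\epsilon\in(0,1)$ and every odd $n\in\mathbb{N}$ with $n\epsilon\ge C\ln(1/(\alpha\beta))$, and every $D\in\mathcal{CTM}$, with probability at least $1-\beta$, $$p_\alpha(D,\mathtt{DPExpMed}_\alpha(D))\le \frac{C'}{\epsilon}\max\left[1,\ln\frac{1}{\alpha\beta n\epsilon}\right].$$
   Context: $V=[-m/2,m/2]$. A dataset is $D=(x_1,\dots,x_n)\in V^n$, indexed so that $x_1\le\dots\le x_n$, with median $\mathcal{T}(D)=x_{\lceil n/2\rceil}$. $\mathcal{CTM}$ is the set of datasets with $|x_{i+1}-x_i|\ge|x_{j+1}-x_j|$ for all $1\le i<j\le\lceil n/2\rceil-1$ and $|x_i-x_{i-1}|\ge|x_j-x_{j-1}|$ for all $\lceil n/2\rceil+1\le j<i\le n$. The percentile loss $q(D,a)$ for $a\in V$ is: $\min\{|\lceil n/2\rceil-i|: a\in[x_i,\mathcal{T}(D)]\}$ if $a\in[x_1,\mathcal{T}(D)]$; $\min\{|\lceil n/2\rceil-i|: a\in[\mathcal{T}(D),x_i]\}$ if $a\in(\mathcal{T}(D),x_n]$; $\lceil n/2\rceil$ otherwise. The widened loss is $p_\alpha(D,\ell)=\min_{a\in V:|a-\ell|\le\alpha m}q(D,a)$. $\mathtt{DPExpMed}_\alpha(D)$ is the random point of $V$ with density proportional to $\exp(-\frac{\epsilon}{2}p_\alpha(D,\ell))$. *)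

theory Defs
  imports "HOL-Analysis.Analysis"
begin

definition Vdom :: "real \<Rightarrow> real set" where
  "Vdom m = {-m/2..m/2}"

text \<open>A dataset of size n is represented by x :: nat => real, with entries x 1, ..., x n.
  It is a valid (sorted) dataset in V^n if all entries lie in V and x 1 <= ... <= x n.\<close>
definition sorted_dataset :: "real \<Rightarrow> nat \<Rightarrow> (nat \<Rightarrow> real) \<Rightarrow> bool" where
  "sorted_dataset m n x \<longleftrightarrow> (\<forall>i\<in>{1..n}. x i \<in> Vdom m) \<and> (\<forall>i j. 1 \<le> i \<longrightarrow> i \<le> j \<longrightarrow> j \<le> n \<longrightarrow> x i \<le> x j)"

definition med_idx :: "nat \<Rightarrow> nat" where
  "med_idx n = nat \<lceil>real n / 2\<rceil>"

definition median :: "nat \<Rightarrow> (nat \<Rightarrow> real) \<Rightarrow> real" where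
  "median n x = x (med_idx n)"

definition CTM :: "nat \<Rightarrow> (nat \<Rightarrow> real) \<Rightarrow> bool" where
  "CTM n x \<longleftrightarrow>
     (\<forall>i j. 1 \<le> i \<longrightarrow> i < j \<longrightarrow> j \<le> med_idx n - 1 \<longrightarrow> \<bar>x (i+1) - x i\<bar> \<ge> \<bar>x (j+1) - x j\<bar>) \<and>
     (\<forall>i j. med_idx n + 1 \<le> j \<longrightarrow> j < i \<longrightarrow> i \<le> n \<longrightarrow> \<bar>x i - x (i-1)\<bar> \<ge> \<bar>x j - x (j-1)\<bar>)"

definition qloss :: "nat \<Rightarrow> (nat \<Rightarrow> real) \<Rightarrow> real \<Rightarrow> nat" where
  "qloss n x a =
     (if x 1 \<le> a \<and> a \<le> median n x then
        Min {nat \<bar>int (med_idx n) - int i\<bar> | i. i \<in> {1..n} \<and> x i \<le> a \<and> a \<le> median n x}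
      else if median n x < a \<and> a \<le> x n then
        Min {nat \<bar>int (med_idx n) - int i\<bar> | i. i \<in> {1..n} \<and> median n x \<le> a \<and> a \<le> x i}
      else med_idx n)"

definition ploss :: "real \<Rightarrow> real \<Rightarrow> nat \<Rightarrow> (nat \<Rightarrow> real) \<Rightarrow> real \<Rightarrow> real" where
  "ploss m \<alpha> n x l = real (Inf {qloss n x a | a. a \<in> Vdom m \<and> \<bar>a - l\<bar> \<le> \<alpha> * m})"

definition dp_weight :: "real \<Rightarrow> real \<Rightarrow> real \<Rightarrow> nat \<Rightarrow> (nat \<Rightarrow> real) \<Rightarrow> real \<Rightarrow> real" where
  "dp_weight m \<alpha> \<epsilon> n x l = exp (- (\<epsilon> / 2) * ploss m \<alpha> n x l)"

definition DPExpMed_prob :: "real \<Rightarrow> real \<Rightarrow> real \<Rightarrow> nat \<Rightarrow> (nat \<Rightarrow> real) \<Rightarrow> real set \<Rightarrow> real" where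
  "DPExpMed_prob m \<alpha> \<epsilon> n x S =
     (LINT l:(S \<inter> Vdom m)|lborel. dp_weight m \<alpha> \<epsilon> n x l) /
     (LINT l:Vdom m|lborel. dp_weight m \<alpha> \<epsilon> n x l)"

end

theory Submission
  imports Defs
begin

text \<open>
  Write \<open>M = \<lceil>n/2\<rceil>\<close>. In a CTM dataset the gaps between consecutive points grow away from the
  median. If \<open>x\<^sub>i \<le> a \<le> x\<^sub>M\<close> with \<open>i < M\<close> and \<open>g\<close> is the gap at \<open>i\<close>, the \<open>M - i\<close> gaps
  after \<open>i\<close> are at most \<open>g\<close> and the \<open>i\<close> gaps before it at least \<open>g\<close>; so \<open>x\<^sub>M - a \<le> (M - i) g\<close>
  and \<open>i g \<le> m\<close>, whence \<open>q(D,a) = M - i \<ge> min (M/2) (|a - T(D)| M / 2m)\<close>. The same holds above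
  the median. Hence \<open>p\<^sub>\<alpha>(D,\<ell>)\<close> vanishes within \<open>\<alpha> m\<close> of the median and grows at least
  linearly with slope \<open>M / 2m\<close> beyond it. The normaliser of the density is therefore at least
  \<open>\<alpha> m\<close>, whereas writing \<open>exp (-\<epsilon> p / 2) = exp (-\<epsilon> p / 4)\<^sup>2\<close> bounds the mass of
  \<open>{p\<^sub>\<alpha> > t}\<close> by \<open>exp (-\<epsilon> t / 4) (m exp (-\<epsilon> M / 8) + 16 m / (\<epsilon> M))\<close>. The failure
  probability is thus at most \<open>exp (-\<epsilon> M / 8) / \<alpha> + 16 exp (-\<epsilon> t / 4) / (\<alpha> \<epsilon> M)\<close>, and
  both terms are at most \<open>\<beta>/2\<close> for \<open>C = C' = 32\<close>.
\<close>

lemma med_idx_le: "med_idx n \<le> n"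
  unfolding med_idx_def by (simp add: nat_le_iff ceiling_le_iff)

lemma med_idx_pos: "1 \<le> n \<Longrightarrow> 1 \<le> med_idx n"
  unfolding med_idx_def by (simp add: le_nat_iff)

lemma le_two_med_idx: "n \<le> 2 * med_idx n"
  unfolding med_idx_def by linarith

lemma two_med_idx_odd: "odd n \<Longrightarrow> 2 * med_idx n = n + 1"
proof -
  assume "odd n"
  then obtain k where k: "n = 2 * k + 1" using oddE by blast
  then have "\<lceil>real n / 2\<rceil> = int k + 1" by linarith
  then show ?thesis unfolding med_idx_def using k by simp
qed

lemma Vdom_sets [measurable]: "Vdom m \<in> sets borel"
  unfolding Vdom_def by simp

lemma emeasure_Vdom_finite: "emeasure lborel (Vdom m) < \<infinity>"
  unfolding Vdom_def by (intro emeasure_bounded_finite) simp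

lemma abs_dp_weight_le_one: "0 \<le> \<epsilon> \<Longrightarrow> \<bar>dp_weight m \<alpha> \<epsilon> n x l\<bar> \<le> 1"
  unfolding dp_weight_def ploss_def by simp

lemma min_le_diff_of_span_bounds:
  fixes m d g j M :: real
  assumes "0 < m" "0 \<le> d" "0 \<le> j" "j \<le> M"
    and span: "d \<le> (M - j) * g" and gap: "j * g \<le> m"
  shows "min (M / 2) (d * M / (2 * m)) \<le> M - j"
proof (cases "M \<le> 2 * j")
  case True
  have "d * M \<le> 2 * (d * j)" using mult_left_mono[OF True \<open>0 \<le> d\<close>] by simp
  also have "d * j \<le> (M - j) * (j * g)"
    using mult_right_mono[OF span \<open>0 \<le> j\<close>] by (simp add: mult_ac)
  also have "\<dots> \<le> (M - j) * m" using gap \<open>j \<le> M\<close> by (simp add: mult_left_mono)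
  finally have "d * M / (2 * m) \<le> M - j" using \<open>0 < m\<close> by (simp add: field_simps)
  then show ?thesis by simp
qed simp

lemma set_integral_exp_from_lower_le:
  fixes a b c :: real
  assumes "0 < c"
  shows "set_integrable lborel {a..b} (\<lambda>l. exp (- c * (l - a)))"
    and "(LINT l:{a..b}|lborel. exp (- c * (l - a))) \<le> 1 / c"
proof -
  show "set_integrable lborel {a..b} (\<lambda>l. exp (- c * (l - a)))"
    by (intro borel_integrable_atLeastAtMost' continuous_intros)
  show "(LINT l:{a..b}|lborel. exp (- c * (l - a))) \<le> 1 / c"
  proof (cases "a \<le> b")
    case True
    have "(LINT l:{a..b}|lborel. exp (- c * (l - a))) = - exp (- c * (b - a)) / c + 1 / c"
      unfolding set_lebesgue_integral_def
    proof (subst integral_FTC_atLeastAtMost[OF True])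
      fix l
      show "((\<lambda>l. - exp (- c * (l - a)) / c) has_vector_derivative exp (- c * (l - a)))
          (at l within {a..b})"
        using \<open>0 < c\<close> by (auto intro!: derivative_eq_intros
            simp flip: has_real_derivative_iff_has_vector_derivative)
    qed (auto intro!: continuous_intros)
    then show ?thesis using \<open>0 < c\<close> by simp
  qed (simp add: set_lebesgue_integral_def \<open>0 < c\<close> less_imp_le)
qed

lemma set_integral_exp_to_upper_le:
  fixes a b c :: real
  assumes "0 < c"
  shows "set_integrable lborel {a..b} (\<lambda>l. exp (- c * (b - l)))"
    and "(LINT l:{a..b}|lborel. exp (- c * (b - l))) \<le> 1 / c"
proof -
  show "set_integrable lborel {a..b} (\<lambda>l. exp (- c * (b - l)))"
    by (intro borel_integrable_atLeastAtMost' continuous_intros)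
  show "(LINT l:{a..b}|lborel. exp (- c * (b - l))) \<le> 1 / c"
  proof (cases "a \<le> b")
    case True
    have "(LINT l:{a..b}|lborel. exp (- c * (b - l))) = 1 / c - exp (- c * (b - a)) / c"
      unfolding set_lebesgue_integral_def
    proof (subst integral_FTC_atLeastAtMost[OF True])
      fix l
      show "((\<lambda>l. exp (- c * (b - l)) / c) has_vector_derivative exp (- c * (b - l)))
          (at l within {a..b})"
        using \<open>0 < c\<close> by (auto intro!: derivative_eq_intros
            simp flip: has_real_derivative_iff_has_vector_derivative)
    qed (auto intro!: continuous_intros)
    then show ?thesis using \<open>0 < c\<close> by simp
  qed (simp add: set_lebesgue_integral_def \<open>0 < c\<close> less_imp_le)
qed

lemma exp_dist_envelope:
  fixes c r p lo hi :: real
  assumes "0 < c" "0 \<le> r"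
  obtains E :: "real \<Rightarrow> real"
  where "integrable lborel E" "integral\<^sup>L lborel E \<le> 2 / c" "\<And>l. 0 \<le> E l"
    and "\<And>l. lo \<le> l \<Longrightarrow> l \<le> hi \<Longrightarrow> r < \<bar>l - p\<bar> \<Longrightarrow> exp (- c * (\<bar>l - p\<bar> - r)) \<le> E l"
proof -
  define a1 a2 where "a1 = p + r" and "a2 = p - r"
  define E1 where "E1 l = indicator {a1..hi} l * exp (- c * (l - a1))" for l :: real
  define E2 where "E2 l = indicator {lo..a2} l * exp (- c * (a2 - l))" for l :: real
  have E1: "integrable lborel E1" "integral\<^sup>L lborel E1 \<le> 1 / c"
    using set_integral_exp_from_lower_le[OF \<open>0 < c\<close>, of a1 hi]
    unfolding E1_def set_integrable_def set_lebesgue_integral_def by simp_all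
  have E2: "integrable lborel E2" "integral\<^sup>L lborel E2 \<le> 1 / c"
    using set_integral_exp_to_upper_le[OF \<open>0 < c\<close>, of lo a2]
    unfolding E2_def set_integrable_def set_lebesgue_integral_def by simp_all
  have "integrable lborel (\<lambda>l. E1 l + E2 l)"
    using E1(1) E2(1) by (rule Bochner_Integration.integrable_add)
  moreover have "integral\<^sup>L lborel (\<lambda>l. E1 l + E2 l) \<le> 2 / c"
    using E1 E2 by simp
  moreover have "0 \<le> E1 l + E2 l" for l
    unfolding E1_def E2_def by simp
  moreover have "exp (- c * (\<bar>l - p\<bar> - r)) \<le> E1 l + E2 l"
    if "lo \<le> l" "l \<le> hi" "r < \<bar>l - p\<bar>" for l
  proof (cases "p < l")
    case True
    then have "a1 \<le> l" "\<not> l \<le> a2" "\<bar>l - p\<bar> - r = l - a1"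
      using that \<open>0 \<le> r\<close> unfolding a1_def a2_def by auto
    then show ?thesis using that unfolding E1_def E2_def by simp
  next
    case False
    then have "l \<le> a2" "\<not> a1 \<le> l" "\<bar>l - p\<bar> - r = a2 - l"
      using that \<open>0 \<le> r\<close> unfolding a1_def a2_def by auto
    then show ?thesis using that unfolding E1_def E2_def by simp
  qed
  ultimately show ?thesis using that by blast
qed

lemma set_integral_ratio_ge:
  fixes g :: "'a \<Rightarrow> real"
  assumes g: "set_integrable M V g" and sets: "S \<inter> V \<in> sets M" "V \<in> sets M"
    and tail: "(LINT l:(V - S)|M. g l) \<le> B" and total: "A \<le> (LINT l:V|M. g l)"
    and "0 < A" "0 \<le> B"
  shows "1 - B / A \<le> (LINT l:(S \<inter> V)|M. g l) / (LINT l:V|M. g l)"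
proof -
  define D N T where "D = (LINT l:V|M. g l)" and "N = (LINT l:(S \<inter> V)|M. g l)"
    and "T = (LINT l:(V - S)|M. g l)"
  have "V - S = V - (S \<inter> V)" by blast
  then have "V - S \<in> sets M" using sets by auto
  moreover have "V = (S \<inter> V) \<union> (V - S)" by blast
  ultimately have "D = N + T"
    unfolding D_def N_def T_def
    using set_integral_Un[of "S \<inter> V" "V - S" M g] set_integrable_subset[OF g] sets by auto
  have "0 < D" using total \<open>0 < A\<close> unfolding D_def by linarith
  have "1 - B / A \<le> 1 - B / D"
    using total \<open>0 < A\<close> \<open>0 \<le> B\<close> unfolding D_def by (simp add: divide_left_mono)
  also have "\<dots> \<le> 1 - T / D"
    using tail \<open>0 < D\<close> unfolding T_def by (simp add: divide_right_mono)
  also have "\<dots> = N / D"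
    using \<open>D = N + T\<close> \<open>0 < D\<close> by (simp add: field_simps)
  finally show ?thesis unfolding N_def D_def .
qed

lemma exp_median_term_le:
  fixes \<alpha> \<beta> \<epsilon> n M :: real
  assumes "0 < \<alpha>" "\<alpha> < 1/3" "0 < \<beta>" "\<beta> < 1/3" "0 < \<epsilon>" "n \<le> 2 * M"
    and large: "32 * ln (1 / (\<alpha> * \<beta>)) \<le> n * \<epsilon>"
  shows "exp (- \<epsilon> * M / 8) / \<alpha> \<le> \<beta> / 2"
proof -
  define K where "K = ln (1 / (\<alpha> * \<beta>))"
  have "\<alpha> * \<beta> \<le> 1/3 * (1/3)"
    using assms by (intro mult_mono) auto
  then have "\<alpha> * \<beta> * exp 1 \<le> 1/9 * 3"
    using exp_le \<open>0 < \<alpha>\<close> \<open>0 < \<beta>\<close> by (intro mult_mono) auto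
  then have "1 \<le> K"
    unfolding K_def using \<open>0 < \<alpha>\<close> \<open>0 < \<beta>\<close> by (subst ln_ge_iff) (auto simp: field_simps)
  moreover have "n * \<epsilon> / 16 \<le> \<epsilon> * M / 8" using \<open>n \<le> 2 * M\<close> \<open>0 < \<epsilon>\<close> by simp
  ultimately have "K + ln 2 \<le> \<epsilon> * M / 8"
    using large ln_2_less_1 unfolding K_def by linarith
  then have "exp (- \<epsilon> * M / 8) \<le> exp (- K - ln 2)" by simp
  also have "\<dots> = \<alpha> * \<beta> / 2"
    unfolding K_def using \<open>0 < \<alpha>\<close> \<open>0 < \<beta>\<close> by (simp add: exp_diff exp_minus)
  finally show ?thesis using \<open>0 < \<alpha>\<close> by (simp add: field_simps)
qed

lemma exp_threshold_term_le:
  fixes \<alpha> \<beta> \<epsilon> n M :: real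
  assumes "0 < \<alpha>" "0 < \<beta>" "0 < \<epsilon>" "0 < n" "n \<le> 2 * M"
  defines "t \<equiv> 32 / \<epsilon> * max 1 (ln (1 / (\<alpha> * \<beta> * n * \<epsilon>)))"
  shows "16 * exp (- \<epsilon> * t / 4) / (\<alpha> * \<epsilon> * M) \<le> \<beta> / 2"
proof -
  define L where "L = ln (1 / (\<alpha> * \<beta> * n * \<epsilon>))"
  have "6 * ln 2 + L \<le> \<epsilon> * t / 4"
    unfolding t_def L_def using \<open>0 < \<epsilon>\<close> ln_2_less_1 by (simp add: max_def)
  then have "exp (- \<epsilon> * t / 4) \<le> exp (- L - real 6 * ln 2)"
    by simp
  also have "\<dots> = exp (- L) / exp (real 6 * ln 2)"
    by (rule exp_diff)
  also have "\<dots> = \<alpha> * \<beta> * n * \<epsilon> / 64"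
    unfolding L_def exp_of_nat_mult using assms by (simp add: exp_minus)
  also have "\<dots> \<le> \<alpha> * \<beta> * \<epsilon> * M / 32"
    using assms by (simp add: field_simps)
  finally show ?thesis using assms by (simp add: field_simps)
qed

lemma ploss_le_qloss: "a \<in> Vdom m \<Longrightarrow> \<bar>a - l\<bar> \<le> \<alpha> * m \<Longrightarrow> ploss m \<alpha> n x l \<le> qloss n x a"
  unfolding ploss_def by (auto intro: cInf_lower)

lemma ploss_attained:
  assumes "l \<in> Vdom m" "0 \<le> \<alpha>"
  obtains a where "a \<in> Vdom m" "\<bar>a - l\<bar> \<le> \<alpha> * m" "ploss m \<alpha> n x l = qloss n x a"
proof -
  let ?W = "{qloss n x a | a. a \<in> Vdom m \<and> \<bar>a - l\<bar> \<le> \<alpha> * m}"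
  have "0 \<le> m" using assms unfolding Vdom_def by auto
  then have "?W \<noteq> {}" using assms by auto
  then have "Inf ?W \<in> ?W" by (rule Inf_nat_def1)
  then show ?thesis using that unfolding ploss_def by auto
qed

locale dataset =
  fixes m :: real and n :: nat and x :: "nat \<Rightarrow> real"
  assumes sorted: "sorted_dataset m n x" and nonempty: "1 \<le> n"
begin

lemma x_mono: "1 \<le> i \<Longrightarrow> i \<le> j \<Longrightarrow> j \<le> n \<Longrightarrow> x i \<le> x j"
  using sorted unfolding sorted_dataset_def by blast

lemma x_in_Vdom: "1 \<le> i \<Longrightarrow> i \<le> n \<Longrightarrow> x i \<in> Vdom m"
  using sorted unfolding sorted_dataset_def by simp

lemma med_idx_bounds: "1 \<le> med_idx n" "med_idx n \<le> n"
  using med_idx_pos[OF nonempty] med_idx_le by auto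

lemma width_nonneg: "0 \<le> m"
  using x_in_Vdom[of 1] nonempty unfolding Vdom_def by auto

lemma spread_le_width: "1 \<le> i \<Longrightarrow> i \<le> n \<Longrightarrow> 1 \<le> j \<Longrightarrow> j \<le> n \<Longrightarrow> x j - x i \<le> m"
  using x_in_Vdom[of i] x_in_Vdom[of j] unfolding Vdom_def by auto

lemma median_in_Vdom: "median n x \<in> Vdom m"
  unfolding median_def using x_in_Vdom med_idx_bounds by blast

lemma first_le_median: "x 1 \<le> median n x"
  unfolding median_def using x_mono med_idx_bounds by blast

lemma median_le_last: "median n x \<le> x n"
  unfolding median_def using x_mono med_idx_bounds by blast

lemma finite_rank_dists: "finite {nat \<bar>int (med_idx n) - int i\<bar> | i. i \<in> {1..n} \<and> P i}"
  by (rule finite_subset[of _ "(\<lambda>i. nat \<bar>int (med_idx n) - int i\<bar>) ` {1..n}"]) auto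

lemma qloss_outside: "a < x 1 \<or> x n < a \<Longrightarrow> qloss n x a = med_idx n"
  using first_le_median median_le_last unfolding qloss_def by auto

lemma qloss_median: "qloss n x (median n x) = 0"
proof -
  let ?S = "{nat \<bar>int (med_idx n) - int i\<bar> | i.
    i \<in> {1..n} \<and> x i \<le> median n x \<and> median n x \<le> median n x}"
  have "0 \<in> ?S"
    using med_idx_bounds unfolding median_def by force
  then have "Min ?S \<le> 0" by (intro Min_le finite_rank_dists)
  then show ?thesis using first_le_median unfolding qloss_def by simp
qed

lemma qloss_below_medianE:
  assumes "x 1 \<le> a" "a \<le> median n x"
  obtains i where "1 \<le> i" "i \<le> med_idx n" "x i \<le> a" "qloss n x a = med_idx n - i"
proof -
  let ?S = "{nat \<bar>int (med_idx n) - int i\<bar> | i. i \<in> {1..n} \<and> x i \<le> a \<and> a \<le> median n x}"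
  have "Min ?S \<in> ?S"
    using assms nonempty by (intro Min_in finite_rank_dists) auto
  then obtain i where i: "1 \<le> i" "i \<le> n" "x i \<le> a"
    and q: "qloss n x a = nat \<bar>int (med_idx n) - int i\<bar>"
    using assms unfolding qloss_def by auto
  show ?thesis
  proof (cases "i \<le> med_idx n")
    case True
    then show ?thesis using that i q by simp
  next
    case False
    then have "median n x \<le> x i" unfolding median_def using i med_idx_bounds by (intro x_mono) auto
    then have "a = median n x" using i(3) assms(2) by simp
    then show ?thesis
      using that[of "med_idx n"] med_idx_bounds qloss_median by (simp add: median_def)
  qed
qed

lemma qloss_above_medianE:
  assumes "median n x < a" "a \<le> x n"
  obtains i where "med_idx n < i" "i \<le> n" "a \<le> x i" "qloss n x a = i - med_idx n"
proof -
  let ?S = "{nat \<bar>int (med_idx n) - int i\<bar> | i. i \<in> {1..n} \<and> median n x \<le> a \<and> a \<le> x i}"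
  have "Min ?S \<in> ?S"
    using assms nonempty by (intro Min_in finite_rank_dists) auto
  then obtain i where i: "1 \<le> i" "i \<le> n" "a \<le> x i"
    and q: "qloss n x a = nat \<bar>int (med_idx n) - int i\<bar>"
    using assms first_le_median unfolding qloss_def by auto
  have "med_idx n < i"
  proof (rule ccontr)
    assume "\<not> med_idx n < i"
    then have "x i \<le> median n x" unfolding median_def using i med_idx_bounds by (intro x_mono) auto
    then show False using assms i by simp
  qed
  then show ?thesis using that i q by simp
qed

lemma qloss_le_med_idx: "qloss n x a \<le> med_idx n"
proof -
  consider "a < x 1 \<or> x n < a" | "x 1 \<le> a" "a \<le> median n x" | "median n x < a" "a \<le> x n"
    by fastforce
  then show ?thesis
  proof cases
    case 3
    then obtain i where "i \<le> n" "qloss n x a = i - med_idx n"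
      by (rule qloss_above_medianE)
    then show ?thesis using le_two_med_idx[of n] by simp
  next
    case 2
    then obtain i where "qloss n x a = med_idx n - i"
      by (rule qloss_below_medianE)
    then show ?thesis by simp
  qed (simp add: qloss_outside)
qed

lemma qloss_antimono_below_median:
  assumes "a \<le> a'" "a' \<le> median n x"
  shows "qloss n x a' \<le> qloss n x a"
proof (cases "x 1 \<le> a")
  case False
  then show ?thesis using qloss_outside qloss_le_med_idx by simp
next
  case True
  let ?S = "\<lambda>b. {nat \<bar>int (med_idx n) - int i\<bar> | i. i \<in> {1..n} \<and> x i \<le> b \<and> b \<le> median n x}"
  have "?S a \<subseteq> ?S a'" "?S a \<noteq> {}" using assms True nonempty by fastforce+
  then have "Min (?S a') \<le> Min (?S a)" by (intro Min_antimono finite_rank_dists)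
  then show ?thesis using True assms unfolding qloss_def by simp
qed

lemma qloss_mono_above_median:
  assumes "median n x \<le> a" "a \<le> a'"
  shows "qloss n x a \<le> qloss n x a'"
proof -
  consider "a = median n x" | "x n < a'" | "median n x < a" "a' \<le> x n" using assms by fastforce
  then show ?thesis
  proof cases
    case 3
    let ?S = "\<lambda>b. {nat \<bar>int (med_idx n) - int i\<bar> | i. i \<in> {1..n} \<and> median n x \<le> b \<and> b \<le> x i}"
    have "?S a' \<subseteq> ?S a" "?S a' \<noteq> {}" using assms 3 nonempty by fastforce+
    then have "Min (?S a) \<le> Min (?S a')" by (intro Min_antimono finite_rank_dists)
    then show ?thesis using 3 assms first_le_median unfolding qloss_def by simp
  qed (simp_all add: qloss_median qloss_outside qloss_le_med_idx)
qed

lemma ploss_eq_0_near_median: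
  assumes "l \<in> Vdom m" "\<bar>l - median n x\<bar> \<le> \<alpha> * m"
  shows "ploss m \<alpha> n x l = 0"
proof -
  have "ploss m \<alpha> n x l \<le> qloss n x (median n x)"
    using ploss_le_qloss median_in_Vdom assms(2) by (simp add: abs_minus_commute)
  then show ?thesis using qloss_median unfolding ploss_def by simp
qed

lemma ploss_antimono_below_median:
  assumes "l \<in> Vdom m" "l' \<in> Vdom m" "0 \<le> \<alpha>" "l \<le> l'" "l' \<le> median n x"
  shows "ploss m \<alpha> n x l' \<le> ploss m \<alpha> n x l"
proof -
  obtain a where a: "a \<in> Vdom m" "\<bar>a - l\<bar> \<le> \<alpha> * m" "ploss m \<alpha> n x l = qloss n x a"
    using ploss_attained assms by metis
  show ?thesis
  proof (cases "l' - \<alpha> * m \<le> a")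
    case True
    then have "\<bar>a - l'\<bar> \<le> \<alpha> * m" using a(2) assms(4) by linarith
    then show ?thesis using ploss_le_qloss[OF a(1)] a(3) by simp
  next
    case False
    have am: "0 \<le> \<alpha> * m" using assms(3) width_nonneg by simp
    have "l' - \<alpha> * m \<in> Vdom m"
      using False a(1) assms(2) am unfolding Vdom_def atLeastAtMost_iff by (intro conjI; linarith)
    then have "ploss m \<alpha> n x l' \<le> qloss n x (l' - \<alpha> * m)"
      using ploss_le_qloss am by simp
    also have "qloss n x (l' - \<alpha> * m) \<le> qloss n x a"
      using False assms(5) am by (intro qloss_antimono_below_median) linarith+
    finally show ?thesis using a(3) by simp
  qed
qed

lemma ploss_mono_above_median:
  assumes "l \<in> Vdom m" "l' \<in> Vdom m" "0 \<le> \<alpha>" "l \<le> l'" "median n x \<le> l"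
  shows "ploss m \<alpha> n x l \<le> ploss m \<alpha> n x l'"
proof -
  obtain a where a: "a \<in> Vdom m" "\<bar>a - l'\<bar> \<le> \<alpha> * m" "ploss m \<alpha> n x l' = qloss n x a"
    using ploss_attained assms by metis
  show ?thesis
  proof (cases "a \<le> l + \<alpha> * m")
    case True
    then have "\<bar>a - l\<bar> \<le> \<alpha> * m" using a(2) assms(4) by linarith
    then show ?thesis using ploss_le_qloss[OF a(1)] a(3) by simp
  next
    case False
    have am: "0 \<le> \<alpha> * m" using assms(3) width_nonneg by simp
    have "l + \<alpha> * m \<in> Vdom m"
      using False a(1) assms(1) am unfolding Vdom_def atLeastAtMost_iff by (intro conjI; linarith)
    then have "ploss m \<alpha> n x l \<le> qloss n x (l + \<alpha> * m)"
      using ploss_le_qloss am by simp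
    also have "qloss n x (l + \<alpha> * m) \<le> qloss n x a"
      using False assms(5) am by (intro qloss_mono_above_median) linarith+
    finally show ?thesis using a(3) by simp
  qed
qed

text \<open>Only on \<open>V\<close> is \<open>p\<^sub>\<alpha>(D,\<cdot>)\<close> monotone on either side of the median: far outside \<open>V\<close> no
  admissible point exists and \<open>ploss\<close> takes the junk value \<open>Inf {} = 0\<close>.\<close>

lemma ploss_borel_on_Vdom:
  assumes "0 \<le> \<alpha>"
  obtains F :: "real \<Rightarrow> real"
  where "F \<in> borel_measurable borel" "\<And>l. l \<in> Vdom m \<Longrightarrow> F l = ploss m \<alpha> n x l"
proof -
  define c where "c = median n x"
  define clamp where "clamp u v l = max u (min v l)" for u v l :: real
  have c: "-m/2 \<le> c" "c \<le> m/2" using median_in_Vdom unfolding c_def Vdom_def by auto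
  have "mono (\<lambda>l. - ploss m \<alpha> n x (clamp (-m/2) c l))"
    using c assms unfolding clamp_def c_def
    by (intro monoI) (auto simp: Vdom_def intro!: ploss_antimono_below_median)
  then have left: "(\<lambda>l. ploss m \<alpha> n x (clamp (-m/2) c l)) \<in> borel_measurable borel"
    using borel_measurable_mono borel_measurable_uminus_eq by blast
  have "mono (\<lambda>l. ploss m \<alpha> n x (clamp c (m/2) l))"
    using c assms unfolding clamp_def c_def
    by (intro monoI) (auto simp: Vdom_def intro!: ploss_mono_above_median)
  then have right: "(\<lambda>l. ploss m \<alpha> n x (clamp c (m/2) l)) \<in> borel_measurable borel"
    by (rule borel_measurable_mono)
  show ?thesis
  proof
    show "(\<lambda>l. if l \<le> c then ploss m \<alpha> n x (clamp (-m/2) c l) else ploss m \<alpha> n x (clamp c (m/2) l))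
        \<in> borel_measurable borel"
      using left right by measurable
  qed (auto simp: clamp_def Vdom_def c)
qed

lemma set_integrable_dp_weight:
  assumes "0 \<le> \<alpha>" "0 \<le> \<epsilon>"
  shows "set_integrable lborel (Vdom m) (dp_weight m \<alpha> \<epsilon> n x)"
proof -
  obtain F where F: "F \<in> borel_measurable borel" "\<And>l. l \<in> Vdom m \<Longrightarrow> F l = ploss m \<alpha> n x l"
    using ploss_borel_on_Vdom assms(1) by blast
  have "(\<lambda>l. indicator (Vdom m) l *\<^sub>R dp_weight m \<alpha> \<epsilon> n x l)
      = (\<lambda>l. indicator (Vdom m) l *\<^sub>R exp (- (\<epsilon> / 2) * F l))"
    by (auto simp: dp_weight_def F(2) indicator_def)
  also have "\<dots> \<in> borel_measurable lborel"
    using F(1) by measurable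
  finally show ?thesis
    unfolding set_integrable_def using emeasure_Vdom_finite
    by (intro integrableI_bounded_set[where A="Vdom m" and B=1] AE_I2)
      (auto simp: abs_dp_weight_le_one assms indicator_def)
qed

lemma ploss_sublevel_Int_Vdom_sets:
  assumes "0 \<le> \<alpha>"
  shows "{l. ploss m \<alpha> n x l \<le> t} \<inter> Vdom m \<in> sets lborel"
proof -
  obtain F where F: "F \<in> borel_measurable borel" "\<And>l. l \<in> Vdom m \<Longrightarrow> F l = ploss m \<alpha> n x l"
    using ploss_borel_on_Vdom assms by blast
  have "{l. ploss m \<alpha> n x l \<le> t} \<inter> Vdom m = {l. F l \<le> t} \<inter> Vdom m" using F(2) by auto
  also have "\<dots> \<in> sets lborel" using F(1) by measurable
  finally show ?thesis .
qed

end

locale odd_ctm_dataset = dataset +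
  assumes ctm: "CTM n x" and odd: "odd n" and width_pos: "0 < m"
begin

lemma two_med_idx: "2 * med_idx n = n + 1"
  using two_med_idx_odd[OF odd] .

lemma gap_antimono_below_median:
  assumes "1 \<le> i" "i < j" "j \<le> med_idx n - 1"
  shows "x (j + 1) - x j \<le> x (i + 1) - x i"
proof -
  have "\<bar>x (j + 1) - x j\<bar> \<le> \<bar>x (i + 1) - x i\<bar>" using ctm assms unfolding CTM_def by blast
  moreover have "x i \<le> x (i + 1)" "x j \<le> x (j + 1)"
    using assms med_idx_bounds by (auto intro!: x_mono)
  ultimately show ?thesis by linarith
qed

lemma gap_mono_above_median:
  assumes "med_idx n + 1 \<le> j" "j < i" "i \<le> n"
  shows "x j - x (j - 1) \<le> x i - x (i - 1)"
proof -
  have "\<bar>x j - x (j - 1)\<bar> \<le> \<bar>x i - x (i - 1)\<bar>" using ctm assms unfolding CTM_def by blast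
  moreover have "x (i - 1) \<le> x i" "x (j - 1) \<le> x j"
    using assms med_idx_bounds by (auto intro!: x_mono)
  ultimately show ?thesis by linarith
qed

lemma span_below_median_le:
  "1 \<le> i \<Longrightarrow> i + k \<le> med_idx n \<Longrightarrow> x (i + k) - x i \<le> real k * (x (i + 1) - x i)"
proof (induction k)
  case (Suc k)
  have "x (i + k + 1) - x (i + k) \<le> x (i + 1) - x i"
    using gap_antimono_below_median[of i "i + k"] Suc.prems by (cases "k = 0") auto
  then show ?case using Suc by (simp add: algebra_simps)
qed simp

lemma span_below_median_ge:
  "k \<le> i \<Longrightarrow> i \<le> med_idx n - 1
    \<Longrightarrow> real k * (x (i + 1) - x i) \<le> x (i + 1) - x (i + 1 - k)"
proof (induction k)
  case (Suc k)
  have "x (i + 1) - x i \<le> x (i - k + 1) - x (i - k)"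
    using gap_antimono_below_median[of "i - k" i] Suc.prems by (cases "k = 0") auto
  moreover have "i - k + 1 = i + 1 - k" "i + 1 - Suc k = i - k" using Suc.prems by auto
  ultimately show ?case using Suc by (simp add: algebra_simps)
qed simp

lemma span_above_median_le:
  "med_idx n + 1 \<le> i \<Longrightarrow> i \<le> n \<Longrightarrow> k + med_idx n \<le> i
    \<Longrightarrow> x i - x (i - k) \<le> real k * (x i - x (i - 1))"
proof (induction k)
  case (Suc k)
  have "x (i - k) - x (i - k - 1) \<le> x i - x (i - 1)"
    using gap_mono_above_median[of "i - k" i] Suc.prems by (cases "k = 0") auto
  then show ?case using Suc by (simp add: algebra_simps diff_diff_left)
qed simp

lemma span_above_median_ge:
  "med_idx n + 1 \<le> i \<Longrightarrow> i + k \<le> n + 1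
    \<Longrightarrow> real k * (x i - x (i - 1)) \<le> x (i + k - 1) - x (i - 1)"
proof (induction k)
  case (Suc k)
  have "x i - x (i - 1) \<le> x (i + k) - x (i + k - 1)"
    using gap_mono_above_median[of i "i + k"] Suc.prems by (cases "k = 0") auto
  then show ?case using Suc by (simp add: algebra_simps)
qed simp

lemma qloss_ge_dist_below_median:
  assumes "x 1 \<le> a" "a \<le> median n x"
  shows "min (real (med_idx n) / 2) (\<bar>a - median n x\<bar> * real (med_idx n) / (2 * m)) \<le> qloss n x a"
proof -
  obtain i where i: "1 \<le> i" "i \<le> med_idx n" "x i \<le> a" and q: "qloss n x a = med_idx n - i"
    using qloss_below_medianE[OF assms] .
  show ?thesis
  proof (cases "i = med_idx n")
    case True
    then show ?thesis using i(3) assms(2) by (simp add: median_def)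
  next
    case False
    define g where "g = x (i + 1) - x i"
    have i': "i \<le> med_idx n - 1" "i + 1 \<le> n" using i(2) False med_idx_bounds by arith+
    have "median n x - a \<le> real (med_idx n - i) * g"
      using span_below_median_le[of i "med_idx n - i"] i False unfolding g_def median_def by simp
    moreover have "real i * g \<le> m"
      using span_below_median_ge[of i i] spread_le_width[of 1 "i + 1"] i i' unfolding g_def by simp
    ultimately show ?thesis
      using min_le_diff_of_span_bounds[of m "median n x - a" "real i" "real (med_idx n)" g]
        width_pos assms i q by (simp add: of_nat_diff)
  qed
qed

lemma qloss_ge_dist_above_median:
  assumes "median n x < a" "a \<le> x n"
  shows "min (real (med_idx n) / 2) (\<bar>a - median n x\<bar> * real (med_idx n) / (2 * m)) \<le> qloss n x a"
proof -
  obtain i where i: "med_idx n < i" "i \<le> n" "a \<le> x i" and q: "qloss n x a = i - med_idx n"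
    using qloss_above_medianE[OF assms] .
  define g where "g = x i - x (i - 1)"
  \<comment> \<open>The mirror index \<open>j = n + 1 - i\<close> plays the role of \<open>i\<close> below the median.\<close>
  define j where "j = n + 1 - i"
  have j: "real j = 2 * real (med_idx n) - real i" "j \<le> med_idx n"
    using two_med_idx i unfolding j_def by linarith+
  have i': "1 \<le> i - 1" "i - 1 \<le> n" using i(1,2) med_idx_bounds by arith+
  have "a - median n x \<le> (real (med_idx n) - real j) * g"
    using span_above_median_le[of i "i - med_idx n"] i j(1) unfolding g_def median_def
    by (simp add: of_nat_diff)
  moreover have "real j * g \<le> m"
    using span_above_median_ge[of i j] spread_le_width[of "i - 1" n] i i' med_idx_bounds
    unfolding g_def j_def by simp
  ultimately show ?thesis
    using min_le_diff_of_span_bounds[of m "a - median n x" "real j" "real (med_idx n)" g]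
      width_pos assms j q i by (simp add: of_nat_diff)
qed

lemma qloss_ge_dist:
  "min (real (med_idx n) / 2) (\<bar>a - median n x\<bar> * real (med_idx n) / (2 * m)) \<le> qloss n x a"
proof -
  consider "a < x 1 \<or> x n < a" | "x 1 \<le> a" "a \<le> median n x" | "median n x < a" "a \<le> x n"
    by fastforce
  then show ?thesis
  proof cases
    case 1
    then show ?thesis by (simp add: qloss_outside)
  next
    case 2
    then show ?thesis by (rule qloss_ge_dist_below_median)
  next
    case 3
    then show ?thesis by (rule qloss_ge_dist_above_median)
  qed
qed

lemma ploss_ge_dist:
  assumes "l \<in> Vdom m" "0 \<le> \<alpha>"
  shows "min (real (med_idx n) / 2) ((\<bar>l - median n x\<bar> - \<alpha> * m) * real (med_idx n) / (2 * m))
    \<le> ploss m \<alpha> n x l"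
proof -
  obtain a where a: "\<bar>a - l\<bar> \<le> \<alpha> * m" "ploss m \<alpha> n x l = qloss n x a"
    using ploss_attained assms by metis
  have "\<bar>l - median n x\<bar> - \<alpha> * m \<le> \<bar>a - median n x\<bar>" using a(1) by linarith
  then have "(\<bar>l - median n x\<bar> - \<alpha> * m) * real (med_idx n) / (2 * m)
      \<le> \<bar>a - median n x\<bar> * real (med_idx n) / (2 * m)"
    using width_pos by (intro divide_right_mono mult_right_mono) auto
  then show ?thesis using qloss_ge_dist[of a] a(2) by linarith
qed

lemma dp_weight_le_of_ploss_gt:
  assumes l: "l \<in> Vdom m" and "0 \<le> \<alpha>" "0 \<le> \<epsilon>" and t: "t < ploss m \<alpha> n x l"
  defines "M \<equiv> real (med_idx n)"
  shows "dp_weight m \<alpha> \<epsilon> n x l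
    \<le> exp (- \<epsilon> * t / 4)
      * (exp (- \<epsilon> * M / 8) + exp (- (\<epsilon> * M / (8 * m)) * (\<bar>l - median n x\<bar> - \<alpha> * m)))"
proof -
  define p where "p = ploss m \<alpha> n x l"
  define d where "d = \<bar>l - median n x\<bar> - \<alpha> * m"
  have lower: "min (M / 2) (d * M / (2 * m)) \<le> p"
    using ploss_ge_dist[OF l \<open>0 \<le> \<alpha>\<close>] unfolding M_def d_def p_def .
  have "dp_weight m \<alpha> \<epsilon> n x l = exp (- \<epsilon> * p / 4) * exp (- \<epsilon> * p / 4)"
    unfolding dp_weight_def p_def by (simp flip: exp_add)
  also have "\<dots> \<le> exp (- \<epsilon> * t / 4) * exp (- \<epsilon> * min (M / 2) (d * M / (2 * m)) / 4)"
    using t lower \<open>0 \<le> \<epsilon>\<close> unfolding p_def by (intro mult_mono) (auto intro: mult_left_mono)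
  also have "exp (- \<epsilon> * min (M / 2) (d * M / (2 * m)) / 4)
      \<le> exp (- \<epsilon> * M / 8) + exp (- (\<epsilon> * M / (8 * m)) * d)"
  proof (cases "M / 2 \<le> d * M / (2 * m)")
    case True
    then have "exp (- \<epsilon> * min (M / 2) (d * M / (2 * m)) / 4) = exp (- \<epsilon> * M / 8)"
      by (simp add: min_def field_simps)
    then show ?thesis using exp_gt_zero[of "- (\<epsilon> * M / (8 * m)) * d"] by linarith
  next
    case False
    then have "exp (- \<epsilon> * min (M / 2) (d * M / (2 * m)) / 4) = exp (- (\<epsilon> * M / (8 * m)) * d)"
      by (simp add: min_def field_simps)
    then show ?thesis using exp_gt_zero[of "- \<epsilon> * M / 8"] by linarith
  qed
  finally show ?thesis unfolding d_def by simp
qed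

lemma dp_weight_normaliser_ge:
  assumes "0 < \<alpha>" "\<alpha> \<le> 1" "0 \<le> \<epsilon>"
  shows "\<alpha> * m \<le> (LINT l:Vdom m|lborel. dp_weight m \<alpha> \<epsilon> n x l)"
proof -
  define c where "c = median n x"
  define I where "I = {max (-m/2) (c - \<alpha> * m) .. min (m/2) (c + \<alpha> * m)}"
  have c: "-m/2 \<le> c" "c \<le> m/2" using median_in_Vdom unfolding c_def Vdom_def by auto
  have "0 < \<alpha> * m" using assms width_pos by simp
  have I: "I \<subseteq> Vdom m" unfolding I_def Vdom_def by (auto simp: min_def max_def)
  have ind: "(\<lambda>l. indicator (Vdom m) l *\<^sub>R indicator I l) = (indicator I :: real \<Rightarrow> real)"
    using I by (auto simp: indicator_def fun_eq_iff)
  have indicator_integrable: "set_integrable lborel (Vdom m) (indicator I :: real \<Rightarrow> real)"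
    unfolding set_integrable_def ind
    by (intro integrable_real_indicator emeasure_bounded_finite) (auto simp: I_def)
  have "\<alpha> * m \<le> measure lborel I"
    unfolding I_def using c \<open>0 < \<alpha> * m\<close> \<open>\<alpha> \<le> 1\<close> width_pos by (auto simp: min_def max_def)
  also have "\<dots> = (LINT l:Vdom m|lborel. indicator I l)"
    unfolding set_lebesgue_integral_def ind by simp
  also have "\<dots> \<le> (LINT l:Vdom m|lborel. dp_weight m \<alpha> \<epsilon> n x l)"
  proof (rule set_integral_mono)
    fix l assume "l \<in> Vdom m"
    then show "indicator I l \<le> dp_weight m \<alpha> \<epsilon> n x l"
      using ploss_eq_0_near_median[of l \<alpha>] unfolding I_def c_def dp_weight_def
      by (auto simp: indicator_def abs_le_iff)
  qed (use indicator_integrable set_integrable_dp_weight assms in auto)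
  finally show ?thesis .
qed

lemma dp_weight_tail_le:
  assumes "0 \<le> \<alpha>" "0 < \<epsilon>" "0 \<le> t"
  defines "M \<equiv> real (med_idx n)"
  shows "(LINT l:(Vdom m - {l. ploss m \<alpha> n x l \<le> t})|lborel. dp_weight m \<alpha> \<epsilon> n x l)
    \<le> exp (- \<epsilon> * t / 4) * (exp (- \<epsilon> * M / 8) * m + 16 * m / (\<epsilon> * M))"
proof -
  let ?T = "Vdom m - {l. ploss m \<alpha> n x l \<le> t}"
  define c where "c = \<epsilon> * M / (8 * m)"
  have "0 < M" using med_idx_bounds unfolding M_def by simp
  then have "0 < c" unfolding c_def using assms width_pos by simp
  have "0 \<le> \<alpha> * m" using \<open>0 \<le> \<alpha>\<close> width_pos by simp
  then obtain E where E: "integrable lborel E" "integral\<^sup>L lborel E \<le> 2 / c" "\<And>l. 0 \<le> E l"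
    "\<And>l. -m/2 \<le> l \<Longrightarrow> l \<le> m/2 \<Longrightarrow> \<alpha> * m < \<bar>l - median n x\<bar>
      \<Longrightarrow> exp (- c * (\<bar>l - median n x\<bar> - \<alpha> * m)) \<le> E l"
    using exp_dist_envelope[OF \<open>0 < c\<close>] by metis
  define H where "H l = exp (- \<epsilon> * t / 4) * (exp (- \<epsilon> * M / 8) * indicator (Vdom m) l + E l)"
    for l :: real
  have V: "integrable lborel (indicator (Vdom m) :: real \<Rightarrow> real)"
    using emeasure_Vdom_finite by (intro integrable_real_indicator) auto
  have "integrable lborel (\<lambda>l. exp (- \<epsilon> * M / 8) * indicator (Vdom m) l + E l)"
    using V E(1) by simp
  then have H_integrable: "integrable lborel H"
    unfolding H_def by (rule integrable_mult_right)
  have "measure lborel (Vdom m) = m" unfolding Vdom_def using width_pos by simp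
  then have "integral\<^sup>L lborel H
      = exp (- \<epsilon> * t / 4) * (exp (- \<epsilon> * M / 8) * m + integral\<^sup>L lborel E)"
    unfolding H_def using E(1) V by simp
  also have "\<dots> \<le> exp (- \<epsilon> * t / 4) * (exp (- \<epsilon> * M / 8) * m + 16 * m / (\<epsilon> * M))"
    using E(2) unfolding c_def by (intro mult_left_mono) auto
  finally have H: "integral\<^sup>L lborel H
      \<le> exp (- \<epsilon> * t / 4) * (exp (- \<epsilon> * M / 8) * m + 16 * m / (\<epsilon> * M))" .
  have "?T = Vdom m - {l. ploss m \<alpha> n x l \<le> t} \<inter> Vdom m" by blast
  also have "\<dots> \<in> sets lborel"
    using ploss_sublevel_Int_Vdom_sets[OF \<open>0 \<le> \<alpha>\<close>] Vdom_sets by simp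
  finally have T_integrable: "set_integrable lborel ?T (dp_weight m \<alpha> \<epsilon> n x)"
    by (rule set_integrable_subset[OF set_integrable_dp_weight[OF \<open>0 \<le> \<alpha>\<close> less_imp_le[OF \<open>0 < \<epsilon>\<close>]]])
      blast
  have "indicator ?T l *\<^sub>R dp_weight m \<alpha> \<epsilon> n x l \<le> H l" for l
  proof (cases "l \<in> ?T")
    case True
    then have l: "l \<in> Vdom m" "t < ploss m \<alpha> n x l" by auto
    have far: "\<alpha> * m < \<bar>l - median n x\<bar>"
    proof (rule ccontr)
      assume "\<not> \<alpha> * m < \<bar>l - median n x\<bar>"
      then have "ploss m \<alpha> n x l = 0" using ploss_eq_0_near_median l(1) by simp
      then show False using l(2) \<open>0 \<le> t\<close> by simp
    qed
    have "dp_weight m \<alpha> \<epsilon> n x l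
        \<le> exp (- \<epsilon> * t / 4) * (exp (- \<epsilon> * M / 8) + exp (- c * (\<bar>l - median n x\<bar> - \<alpha> * m)))"
      using dp_weight_le_of_ploss_gt[OF l(1) \<open>0 \<le> \<alpha>\<close> _ l(2)] \<open>0 < \<epsilon>\<close>
      unfolding c_def M_def by simp
    also have "\<dots> \<le> exp (- \<epsilon> * t / 4) * (exp (- \<epsilon> * M / 8) + E l)"
      using E(4) far l(1) unfolding Vdom_def by simp
    finally show ?thesis using True l(1) unfolding H_def by simp
  next
    case False
    then show ?thesis unfolding H_def using E(3) by simp
  qed
  then have "(LINT l:?T|lborel. dp_weight m \<alpha> \<epsilon> n x l) \<le> integral\<^sup>L lborel H"
    using T_integrable H_integrable unfolding set_integrable_def set_lebesgue_integral_def
    by (intro integral_mono)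
  with H show ?thesis by linarith
qed

lemma DPExpMed_prob_ploss_le_ge:
  assumes "0 < \<alpha>" "\<alpha> \<le> 1" "0 < \<epsilon>" "0 \<le> t"
  defines "M \<equiv> real (med_idx n)"
  shows "1 - exp (- \<epsilon> * M / 8) / \<alpha> - 16 * exp (- \<epsilon> * t / 4) / (\<alpha> * \<epsilon> * M)
    \<le> DPExpMed_prob m \<alpha> \<epsilon> n x {l. ploss m \<alpha> n x l \<le> t}"
proof -
  define B where "B = exp (- \<epsilon> * t / 4) * (exp (- \<epsilon> * M / 8) * m + 16 * m / (\<epsilon> * M))"
  have "0 < M" using med_idx_bounds unfolding M_def by simp
  have "B / (\<alpha> * m)
      = exp (- \<epsilon> * t / 4) * (exp (- \<epsilon> * M / 8) / \<alpha>) + 16 * exp (- \<epsilon> * t / 4) / (\<alpha> * \<epsilon> * M)"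
    unfolding B_def using assms width_pos \<open>0 < M\<close> by (simp add: field_simps)
  also have "\<dots> \<le> exp (- \<epsilon> * M / 8) / \<alpha> + 16 * exp (- \<epsilon> * t / 4) / (\<alpha> * \<epsilon> * M)"
    using assms by (intro add_right_mono mult_left_le_one_le) auto
  finally have "1 - exp (- \<epsilon> * M / 8) / \<alpha> - 16 * exp (- \<epsilon> * t / 4) / (\<alpha> * \<epsilon> * M) \<le> 1 - B / (\<alpha> * m)"
    by linarith
  also have "\<dots> \<le> DPExpMed_prob m \<alpha> \<epsilon> n x {l. ploss m \<alpha> n x l \<le> t}"
    unfolding DPExpMed_prob_def B_def M_def
    using assms width_pos med_idx_bounds
    by (intro set_integral_ratio_ge set_integrable_dp_weight ploss_sublevel_Int_Vdom_sets
        dp_weight_tail_le dp_weight_normaliser_ge) auto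
  finally show ?thesis .
qed

end

theorem theorem7p9:
  shows "\<exists>C C' :: real. C > 0 \<and> C' > 0 \<and>
    (\<forall>m \<alpha> \<beta> \<epsilon> :: real. \<forall>n :: nat. \<forall>x :: nat \<Rightarrow> real.
       m > 0 \<longrightarrow> 0 < \<alpha> \<longrightarrow> \<alpha> < 1/3 \<longrightarrow> 0 < \<beta> \<longrightarrow> \<beta> < 1/3 \<longrightarrow>
       0 < \<epsilon> \<longrightarrow> \<epsilon> < 1 \<longrightarrow> odd n \<longrightarrow>
       real n * \<epsilon> \<ge> C * ln (1 / (\<alpha> * \<beta>)) \<longrightarrow>
       sorted_dataset m n x \<longrightarrow> CTM n x \<longrightarrow>
       DPExpMed_prob m \<alpha> \<epsilon> n x
         {l. ploss m \<alpha> n x l \<le> C' / \<epsilon> * max 1 (ln (1 / (\<alpha> * \<beta> * real n * \<epsilon>)))}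
       \<ge> 1 - \<beta>)"
proof (intro exI[of _ 32] conjI allI impI)
  fix m \<alpha> \<beta> \<epsilon> :: real and n :: nat and x :: "nat \<Rightarrow> real"
  assume "m > 0" "0 < \<alpha>" "\<alpha> < 1/3" "0 < \<beta>" "\<beta> < 1/3" "0 < \<epsilon>" "\<epsilon> < 1" "odd n"
    and large: "real n * \<epsilon> \<ge> 32 * ln (1 / (\<alpha> * \<beta>))"
    and "sorted_dataset m n x" "CTM n x"
  then interpret odd_ctm_dataset m n x
    by unfold_locales (auto simp: Suc_le_eq odd_pos)
  define t where "t = 32 / \<epsilon> * max 1 (ln (1 / (\<alpha> * \<beta> * real n * \<epsilon>)))"
  have n: "0 < real n" "real n \<le> 2 * real (med_idx n)"
    using nonempty le_two_med_idx[of n] by simp_all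
  have "1 - exp (- \<epsilon> * real (med_idx n) / 8) / \<alpha>
        - 16 * exp (- \<epsilon> * t / 4) / (\<alpha> * \<epsilon> * real (med_idx n))
      \<le> DPExpMed_prob m \<alpha> \<epsilon> n x {l. ploss m \<alpha> n x l \<le> t}"
    using \<open>0 < \<alpha>\<close> \<open>\<alpha> < 1/3\<close> \<open>0 < \<epsilon>\<close> unfolding t_def
    by (intro DPExpMed_prob_ploss_le_ge) auto
  moreover have "exp (- \<epsilon> * real (med_idx n) / 8) / \<alpha> \<le> \<beta> / 2"
    using exp_median_term_le large n \<open>0 < \<alpha>\<close> \<open>\<alpha> < 1/3\<close> \<open>0 < \<beta>\<close> \<open>\<beta> < 1/3\<close> \<open>0 < \<epsilon>\<close> by blast
  moreover have "16 * exp (- \<epsilon> * t / 4) / (\<alpha> * \<epsilon> * real (med_idx n)) \<le> \<beta> / 2"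
    using exp_threshold_term_le n \<open>0 < \<alpha>\<close> \<open>0 < \<beta>\<close> \<open>0 < \<epsilon>\<close> unfolding t_def by blast
  ultimately show "1 - \<beta> \<le> DPExpMed_prob m \<alpha> \<epsilon> n x {l. ploss m \<alpha> n x l \<le> t}"
    by linarith
qed simp_all

end
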